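(* Let $D$ be an instance all of whose tuples are endogenous ($D^n=D$), let $\mathcal{Q}$ be a monotone query, and let $\bar a\in\mathcal{Q}(D)$. A tuple $t$ is an actual cause for $\bar a$ if and only if there is $D'\subseteq D$ with $t\in(D\smallsetminus D')\subseteq D^n$ and $(D,D',\bar a)\in\mathcal{MSSEP}^{s}(\mathcal{Q})$.
   Context: A query $\mathcal{Q}$ is monotone if $D_1\subseteq D_2$ implies $\mathcal{Q}(D_1)\subseteq\mathcal{Q}(D_2)$; $D\models\mathcal{Q}(\bar a)$ means $\bar a\in\mathcal{Q}(D)$. A tuple $\tau\in D^n$ is an actual cause for $\bar a$ if there is $\Gamma\subseteq D^n$ with $D\smallsetminus\Gamma\models\mathcal{Q}(\bar a)$ and $D\smallsetminus(\Gamma\cup\{\tau\})\not\models\mathcal{Q}(\bar a)$. $\mathcal{MSSEP}^{s}(\mathcal{Q})$ is the set of triples $(D,D',\bar a)$ with $\bar a\in\mathcal{Q}(D)$, $D'\subseteq D$, $\bar a\notin\mathcal{Q}(D')$, and $D'$ subset-maximal among subsets of $D$ with this last property. *)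

theory Defs
  imports Main
begin

text \<open>An instance is a set of tuples of type 'f; a query maps an instance to a set of
answers of type 'b. D |= Q(a) iff a \<in> Q D.\<close>

definition monotone_query :: "('f set \<Rightarrow> 'b set) \<Rightarrow> bool" where
  "monotone_query Q \<longleftrightarrow> (\<forall>D1 D2. D1 \<subseteq> D2 \<longrightarrow> Q D1 \<subseteq> Q D2)"

definition actual_cause ::
  "('f set \<Rightarrow> 'b set) \<Rightarrow> 'f set \<Rightarrow> 'f set \<Rightarrow> 'b \<Rightarrow> 'f \<Rightarrow> bool" where
  "actual_cause Q D Dn a \<tau> \<longleftrightarrow> \<tau> \<in> Dn \<and>
     (\<exists>\<Gamma>. \<Gamma> \<subseteq> Dn \<and> a \<in> Q (D - \<Gamma>) \<and> a \<notin> Q (D - (\<Gamma> \<union> {\<tau>})))"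

definition MSSEP_s :: "('f set \<Rightarrow> 'b set) \<Rightarrow> ('f set \<times> 'f set \<times> 'b) set" where
  "MSSEP_s Q = {(D, D', a). a \<in> Q D \<and> D' \<subseteq> D \<and> a \<notin> Q D' \<and>
     (\<forall>D''. D' \<subseteq> D'' \<and> D'' \<subseteq> D \<and> a \<notin> Q D'' \<longrightarrow> D'' = D')}"

end

theory Submission
  imports Defs
begin

text \<open>Given a contingency set \<Gamma> for t, extend D - (\<Gamma> \<union> {t}) to a maximal subinstance of D
not entailing a; by monotonicity it cannot contain t, since it would then contain D - \<Gamma>.
Conversely, if D' is maximal and t \<notin> D', then D' \<union> {t} entails a, so \<Gamma> = D - D' - {t}
witnesses that t is an actual cause.\<close>

lemma finite_subset_extends_to_maximal:
  assumes "finite D" and "X \<subseteq> D" and "P X"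
  shows "\<exists>Y. X \<subseteq> Y \<and> Y \<subseteq> D \<and> P Y \<and> (\<forall>Z. Y \<subseteq> Z \<and> Z \<subseteq> D \<and> P Z \<longrightarrow> Z = Y)"
proof -
  define S where "S = {Y. Y \<subseteq> D \<and> P Y}"
  have "finite S" using assms(1) by (simp add: S_def)
  moreover have "X \<in> S" using assms(2,3) by (simp add: S_def)
  ultimately obtain Y where "Y \<in> S" and "X \<subseteq> Y" and "\<forall>Z \<in> S. Y \<subseteq> Z \<longrightarrow> Y = Z"
    by (meson finite_has_maximal2)
  then show ?thesis
    unfolding S_def by (metis (mono_tags, lifting) mem_Collect_eq)
qed

lemma MSSEP_s_exists_above:
  assumes "finite D" and "a \<in> Q D" and "X \<subseteq> D" and "a \<notin> Q X"
  obtains D' where "X \<subseteq> D'" and "(D, D', a) \<in> MSSEP_s Q"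
  using finite_subset_extends_to_maximal[of D X "\<lambda>Y. a \<notin> Q Y"] assms
  unfolding MSSEP_s_def by auto

lemma MSSEP_s_insert:
  assumes "(D, D', a) \<in> MSSEP_s Q" and "t \<in> D - D'"
  shows "a \<in> Q (insert t D')"
  using assms unfolding MSSEP_s_def by blast

lemma monotone_query_not_entailed_above_contingency:
  assumes "monotone_query Q" and "a \<in> Q (D - \<Gamma>)"
    and "D - (\<Gamma> \<union> {t}) \<subseteq> D'" and "a \<notin> Q D'"
  shows "t \<notin> D'"
proof
  assume "t \<in> D'"
  with assms(3) have "D - \<Gamma> \<subseteq> D'" by blast
  with assms(1,2) have "a \<in> Q D'" unfolding monotone_query_def by blast
  with assms(4) show False by contradiction
qed

theorem proposition10:
  fixes Q :: "'f set \<Rightarrow> 'b set" and D Dn :: "'f set" and a :: 'b and t :: 'f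
  assumes "finite D"
    and "Dn = D"
    and "monotone_query Q"
    and "a \<in> Q D"
  shows "actual_cause Q D Dn a t \<longleftrightarrow>
           (\<exists>D'. D' \<subseteq> D \<and> t \<in> D - D' \<and> D - D' \<subseteq> Dn \<and> (D, D', a) \<in> MSSEP_s Q)"
proof
  assume "actual_cause Q D Dn a t"
  then obtain \<Gamma> where "t \<in> D" and in_Q: "a \<in> Q (D - \<Gamma>)"
    and not_in_Q: "a \<notin> Q (D - (\<Gamma> \<union> {t}))"
    using assms(2) unfolding actual_cause_def by blast
  obtain D' where above: "D - (\<Gamma> \<union> {t}) \<subseteq> D'" and M: "(D, D', a) \<in> MSSEP_s Q"
    using MSSEP_s_exists_above[OF assms(1,4) _ not_in_Q] by blast
  have "D' \<subseteq> D" "a \<notin> Q D'" using M unfolding MSSEP_s_def by auto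
  moreover have "t \<notin> D'"
    using monotone_query_not_entailed_above_contingency[OF assms(3) in_Q above] \<open>a \<notin> Q D'\<close> .
  ultimately show "\<exists>D'. D' \<subseteq> D \<and> t \<in> D - D' \<and> D - D' \<subseteq> Dn \<and> (D, D', a) \<in> MSSEP_s Q"
    using M \<open>t \<in> D\<close> assms(2) by blast
next
  assume "\<exists>D'. D' \<subseteq> D \<and> t \<in> D - D' \<and> D - D' \<subseteq> Dn \<and> (D, D', a) \<in> MSSEP_s Q"
  then obtain D' where "D' \<subseteq> D" and t: "t \<in> D - D'" and M: "(D, D', a) \<in> MSSEP_s Q"
    by blast
  have "D - (D - D' - {t}) = insert t D'" "D - ((D - D' - {t}) \<union> {t}) = D'"
    using \<open>D' \<subseteq> D\<close> t by auto
  moreover have "a \<in> Q (insert t D')" using MSSEP_s_insert[OF M t] .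
  moreover have "a \<notin> Q D'" using M unfolding MSSEP_s_def by blast
  ultimately show "actual_cause Q D Dn a t"
    using t assms(2) unfolding actual_cause_def
    by (intro conjI exI[of _ "D - D' - {t}"]) auto
qed

end
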